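(* For every integer $k$ and every integer $n\geq 1$, \[ b_{n}^{(k)}(x+1)-b_{n}^{(k)}(x)=\sum_{p=1}^{n}\sum_{m=1}^{p}\binom{n}{p}\frac{(-1)^{m+p}\,m!}{m^{k}}S_{2}(p,m)\,b_{n-p}(x). \]
   Context: For $k\in\mathbb{Z}$, the polylogarithm is $Li_k(x)=\sum_{n=1}^{\infty}\frac{x^n}{n^k}$. The poly-Bernoulli polynomials of the second kind $b_n^{(k)}(x)$ are defined by the generating function \[ \frac{Li_{k}(1-e^{-t})}{\log(1+t)}(1+t)^{x}=\sum_{n=0}^{\infty}b_{n}^{(k)}(x)\frac{t^{n}}{n!}. \] The Bernoulli polynomials of the second kind $b_n(x)$ are defined by $\frac{t}{\log(1+t)}(1+t)^x=\sum_{n=0}^{\infty}b_n(x)\frac{t^n}{n!}$. $S_2(n,l)$ denotes the Stirling numbers of the second kind, defined by $x^n=\sum_{l=0}^{n}S_2(n,l)(x)_l$, where $(x)_l=x(x-1)\cdots(x-l+1)$. *)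

theory Defs
  imports "HOL-Computational_Algebra.Formal_Power_Series" "HOL-Combinatorics.Stirling"
begin

text \<open>Formal power series Li_k(1 - e^{-t}) = sum_{j>=1} (1 - e^{-t})^j / j^k.
  Since (1 - e^{-t})^j has order j, the coefficient of t^m only involves j <= m.\<close>
definition polylog_fps :: "int \<Rightarrow> real fps" where
  "polylog_fps k = Abs_fps (\<lambda>m. \<Sum>j=1..m. fps_nth ((1 - fps_exp (-1)) ^ j) m / (real j powi k))"

text \<open>log(1+t) is fps_ln 1; (1+t)^x is fps_binomial x.\<close>
definition poly_bernoulli2 :: "int \<Rightarrow> nat \<Rightarrow> real \<Rightarrow> real" where
  "poly_bernoulli2 k n x =
     fact n * fps_nth (polylog_fps k * fps_binomial x / fps_ln 1) n"

definition bernoulli2 :: "nat \<Rightarrow> real \<Rightarrow> real" where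
  "bernoulli2 n x = fact n * fps_nth (fps_X * fps_binomial x / fps_ln 1) n"

end

theory Submission
  imports Defs
begin

text \<open>Since (1 + t)^(x+1) = (1 + t) (1 + t)^x, the generating function of the differences
  b_n^(k)(x+1) - b_n^(k)(x) is Li_k(1 - e^-t) times the generating function t (1 + t)^x / log(1 + t)
  of the b_n(x). The coefficients of Li_k(1 - e^-t) are read off from the exponential generating
  function (e^t - 1)^m = m! \<Sum>_p S_2(p,m) t^p / p!, and the identity is the Cauchy product of the
  two series.\<close>

lemma fps_deriv_exp_minus_one_power:
  fixes c :: "'a::field_char_0"
  shows "fps_deriv ((fps_exp c - 1) ^ Suc m)
    = fps_const (of_nat (Suc m) * c) * ((fps_exp c - 1) ^ Suc m + (fps_exp c - 1) ^ m)"
proof -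
  have "fps_deriv ((fps_exp c - 1) ^ Suc m)
      = fps_const (of_nat (Suc m)) * (fps_const c * fps_exp c) * (fps_exp c - 1) ^ m"
    by (subst fps_deriv_power) simp
  also have "\<dots> = fps_const (of_nat (Suc m) * c) * ((fps_exp c - 1) ^ Suc m + (fps_exp c - 1) ^ m)"
    by (simp add: algebra_simps fps_const_mult)
  finally show ?thesis .
qed

lemma fps_nth_exp_minus_one_power:
  fixes c :: "'a::field_char_0"
  shows "fps_nth ((fps_exp c - 1) ^ m) p = c ^ p * fact m * of_nat (Stirling p m) / fact p"
proof (induction p arbitrary: m)
  case 0
  then show ?case by (cases m) auto
next
  case (Suc p)
  show ?case
  proof (cases m)
    case 0
    then show ?thesis by simp
  next
    case (Suc m')
    define E where "E = fps_exp c - 1"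
    txt \<open>Differentiation turns the power into the recurrence of the Stirling numbers.\<close>
    define a where "a = fps_nth (E ^ Suc m') p + fps_nth (E ^ m') p"
    have "of_nat (Suc p) * fps_nth (E ^ Suc m') (Suc p) = fps_nth (fps_deriv (E ^ Suc m')) p"
      by (simp only: fps_deriv_nth Suc_eq_plus1)
    also have "\<dots> = of_nat (Suc m') * c * a"
      unfolding E_def a_def fps_deriv_exp_minus_one_power
      by (simp only: fps_mult_left_const_nth fps_add_nth)
    finally have rec: "of_nat (Suc p) * fps_nth (E ^ Suc m') (Suc p) = of_nat (Suc m') * c * a" .
    have "of_nat (Suc m') * a = c ^ p * fact (Suc m')
        * (of_nat (Suc m') * of_nat (Stirling p (Suc m')) + of_nat (Stirling p m')) / fact p"
      unfolding a_def E_def Suc.IH by (simp add: add_divide_distrib algebra_simps del: of_nat_Suc)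
    also have "\<dots> = c ^ p * fact (Suc m') * of_nat (Stirling (Suc p) (Suc m')) / fact p"
      by (simp add: distrib_right)
    finally have sum: "of_nat (Suc m') * a
        = c ^ p * fact (Suc m') * of_nat (Stirling (Suc p) (Suc m')) / fact p" .
    have "fps_nth (E ^ Suc m') (Suc p) = c * (of_nat (Suc m') * a) / of_nat (Suc p)"
      using rec by (simp add: eq_divide_eq mult_ac del: of_nat_Suc)
    also have "\<dots> = c ^ Suc p * fact (Suc m') * of_nat (Stirling (Suc p) (Suc m')) / fact (Suc p)"
      unfolding sum by (simp add: fact_Suc[of p] mult_ac del: of_nat_Suc)
    finally show ?thesis
      unfolding E_def \<open>m = Suc m'\<close> .
  qed
qed

lemma fps_nth_one_minus_exp_neg_power:
  "fps_nth ((1 - fps_exp (-1 :: 'a::field_char_0)) ^ m) p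
     = (-1) ^ (m + p) * fact m * of_nat (Stirling p m) / fact p"
proof -
  have "(-1 :: 'a fps) ^ m = fps_const ((-1) ^ m)"
    by (metis fps_const_neg fps_const_1_eq_1 fps_const_power)
  then have "(1 - fps_exp (-1 :: 'a)) ^ m = fps_const ((-1) ^ m) * (fps_exp (-1) - 1) ^ m"
    by (metis minus_diff_eq power_minus)
  then show ?thesis
    by (simp add: fps_nth_exp_minus_one_power power_add)
qed

lemma fps_nth_polylog_fps:
  "fps_nth (polylog_fps k) p
     = (\<Sum>m=1..p. (-1) ^ (m + p) * fact m / (real m powi k) * real (Stirling p m) / fact p)"
  unfolding polylog_fps_def by (simp add: fps_nth_one_minus_exp_neg_power mult.commute)

lemma subdegree_fps_ln:
  fixes c :: "'a::field_char_0"
  assumes "c \<noteq> 0"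
  shows "subdegree (fps_ln c) = 1"
  using assms by (intro subdegreeI) (auto simp: fps_ln_nth)

lemma fps_binomial_add_one_diff_div_fps_ln:
  fixes A :: "'a::field_char_0 fps"
  assumes "c \<noteq> 0"
  shows "A * fps_binomial (x + 1) / fps_ln c - A * fps_binomial x / fps_ln c
    = A * (fps_X * fps_binomial x / fps_ln c)"
proof -
  have "A * fps_binomial (x + 1) - A * fps_binomial x = A * (fps_X * fps_binomial x)"
    by (simp add: fps_binomial_add_mult fps_binomial_1 algebra_simps)
  moreover have "subdegree (fps_X * fps_binomial x) = 1"
    by (subst subdegree_mult) (auto simp: subdegree_eq_0_iff dest: arg_cong[of _ _ "\<lambda>f. fps_nth f 0"])
  ultimately show ?thesis
    using assms by (simp add: subdegree_fps_ln fps_divide_times flip: fps_divide_diff)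
qed

theorem theorem3:
  fixes k :: int and n :: nat and x :: real
  assumes "n \<ge> 1"
  shows "poly_bernoulli2 k n (x + 1) - poly_bernoulli2 k n x =
    (\<Sum>p=1..n. \<Sum>m=1..p. real (n choose p) * (-1) ^ (m + p) * fact m / (real m powi k)
        * real (Stirling p m) * bernoulli2 (n - p) x)"
proof -
  define G where "G = fps_X * fps_binomial x / fps_ln 1"
  have G_nth: "fps_nth G j = bernoulli2 j x / fact j" for j
    unfolding G_def bernoulli2_def by simp
  have "poly_bernoulli2 k n (x + 1) - poly_bernoulli2 k n x = fact n * fps_nth (polylog_fps k * G) n"
    unfolding poly_bernoulli2_def G_def
    by (simp flip: fps_binomial_add_one_diff_div_fps_ln right_diff_distrib)
  also have "\<dots> = fact n * (\<Sum>p=1..n. fps_nth (polylog_fps k) p * fps_nth G (n - p))"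
    by (simp add: fps_mult_nth sum.atLeast_Suc_atMost fps_nth_polylog_fps)
  also have "\<dots> = (\<Sum>p=1..n. \<Sum>m=1..p. real (n choose p) * (-1) ^ (m + p) * fact m / (real m powi k)
        * real (Stirling p m) * bernoulli2 (n - p) x)"
    unfolding sum_distrib_left
  proof (rule sum.cong[OF refl])
    fix p assume "p \<in> {1..n}"
    then have "real (n choose p) = fact n / (fact p * fact (n - p))"
      by (simp add: binomial_fact)
    then show "fact n * (fps_nth (polylog_fps k) p * fps_nth G (n - p)) = (\<Sum>m=1..p. real (n choose p)
        * (-1) ^ (m + p) * fact m / (real m powi k) * real (Stirling p m) * bernoulli2 (n - p) x)"
      unfolding fps_nth_polylog_fps G_nth sum_distrib_right sum_distrib_left
      by (intro sum.cong refl) (simp add: field_simps)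
  qed
  finally show ?thesis .
qed

end
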